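(* Consider the following recursive procedure on input $(S,C,w)$, where $S$ is a path with vertex set $V$, $w:V\to\mathbb R_{\ge0}$, and $C$ is a partial coloring with domain $\mathrm{support}(w)=\{v:w(v)>0\}$: if $V\setminus\mathrm{support}(w)$ is a cover of $(S,C)$, return $X=V\setminus\mathrm{support}(w)$; otherwise choose $x,y,z\in\mathrm{support}(w)$ with $C(x)=C(z)\neq C(y)$ and $y$ between $x$ and $z$ on $S$, let $\varepsilon=\min\{w(x),w(y),w(z)\}$, let $w_1=w-\varepsilon\cdot\mathbf 1_{\{x,y,z\}}$, and return the output of the procedure on $(S,C|_{\mathrm{support}(w_1)},w_1)$. Then the procedure is well defined (whenever $V\setminus\mathrm{support}(w)$ is not a cover, such $x,y,z$ exist), terminates, and returns a cover $X$ of $(S,C)$ with $w(X)\le 3\,\mathrm{OPT}(S,C,w)$.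
   Context: A partial coloring of a tree (here a path) is convex if it can be extended to a total coloring in which every color class induces a connected subtree. A set $X\subseteq V$ is a cover of $(T,C)$ if the restriction of $C$ to $\mathrm{Domain}(C)\setminus X$ is convex. $w(X)=\sum_{v\in X}w(v)$, and $\mathrm{OPT}(T,C,w)$ is the minimum of $w(X)$ over all covers $X$ (equivalently the minimum cost of a convex recoloring). *)

theory Defs
  imports Complex_Main
begin

text \<open>The path S has vertex set V = {0..<n} with edges {i, i+1}.
  A partial colouring is a map C :: nat \<Rightarrow> 'c option; Domain(C) = dom C.\<close>

definition path_vertices :: "nat \<Rightarrow> nat set" where
  "path_vertices n = {..<n}"

definition total_convex :: "nat \<Rightarrow> (nat \<Rightarrow> 'c) \<Rightarrow> bool" where
  "total_convex n f \<longleftrightarrow>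
     (\<forall>c u v x. u < v \<and> v < x \<and> x < n \<and> f u = c \<and> f x = c \<longrightarrow> f v = c)"

definition convex_pc :: "nat \<Rightarrow> (nat \<Rightarrow> 'c option) \<Rightarrow> bool" where
  "convex_pc n C \<longleftrightarrow>
     (\<exists>f. (\<forall>v\<in>dom C. C v = Some (f v)) \<and> total_convex n f)"

definition is_cover :: "nat \<Rightarrow> (nat \<Rightarrow> 'c option) \<Rightarrow> nat set \<Rightarrow> bool" where
  "is_cover n C X \<longleftrightarrow> X \<subseteq> path_vertices n \<and> convex_pc n (C |` (dom C - X))"

definition OPT :: "nat \<Rightarrow> (nat \<Rightarrow> 'c option) \<Rightarrow> (nat \<Rightarrow> real) \<Rightarrow> real" where
  "OPT n C w = Min ((\<lambda>X. sum w X) ` {X. is_cover n C X})"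

definition supp :: "nat \<Rightarrow> (nat \<Rightarrow> real) \<Rightarrow> nat set" where
  "supp n w = {v \<in> path_vertices n. 0 < w v}"

definition between :: "nat \<Rightarrow> nat \<Rightarrow> nat \<Rightarrow> bool" where
  "between x y z \<longleftrightarrow> (x < y \<and> y < z) \<or> (z < y \<and> y < x)"

definition bad_triple ::
  "nat \<Rightarrow> (nat \<Rightarrow> 'c option) \<Rightarrow> (nat \<Rightarrow> real) \<Rightarrow> nat \<Rightarrow> nat \<Rightarrow> nat \<Rightarrow> bool" where
  "bad_triple n C w x y z \<longleftrightarrow>
     x \<in> supp n w \<and> y \<in> supp n w \<and> z \<in> supp n w \<and>
     C x = C z \<and> C x \<noteq> C y \<and> between x y z"

text \<open>One recursive step of the procedure: the current instance is (S, C|supp(w), w);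
  it is not yet solved and w is reduced on a chosen bad triple.\<close>
definition proc_step ::
  "nat \<Rightarrow> (nat \<Rightarrow> 'c option) \<Rightarrow> (nat \<Rightarrow> real) \<Rightarrow> (nat \<Rightarrow> real) \<Rightarrow> bool" where
  "proc_step n C w w' \<longleftrightarrow>
     \<not> is_cover n (C |` supp n w) (path_vertices n - supp n w) \<and>
     (\<exists>x y z. bad_triple n (C |` supp n w) w x y z \<and>
        (let \<epsilon> = Min {w x, w y, w z} in
          w' = (\<lambda>v. if v \<in> {x, y, z} then w v - \<epsilon> else w v)))"

text \<open>Possible outputs of the (nondeterministic) procedure on input (S, C|supp(w), w).\<close>
inductive proc_out ::
  "nat \<Rightarrow> (nat \<Rightarrow> 'c option) \<Rightarrow> (nat \<Rightarrow> real) \<Rightarrow> nat set \<Rightarrow> bool"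
  for n C where
  out_done: "is_cover n (C |` supp n w) (path_vertices n - supp n w)
         \<Longrightarrow> proc_out n C w (path_vertices n - supp n w)"
| out_step: "proc_step n C w w' \<Longrightarrow> proc_out n C w' X \<Longrightarrow> proc_out n C w X"

end

theory Submission
  imports Defs
begin

text \<open>A local-ratio argument. Every bad triple meets every cover, so a step that lowers the
  weights on a bad triple by \<open>\<epsilon>\<close> lowers the cost of any cover by at least \<open>\<epsilon>\<close>, and the
  cost of any vertex set by at most \<open>3\<epsilon>\<close>. The output has weight zero for the final weights,
  so unrolling the steps bounds its weight by three times that of an optimal cover. Each step
  empties at least one vertex of the support, which gives termination; and if no bad triple
  is left, the colouring on the support extends convexly by giving every vertex the colour of
  the nearest support vertex to its left (or of the leftmost one).\<close>

lemma finite_supp: "finite (supp n w)"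
  unfolding supp_def path_vertices_def by simp

lemma supp_subset_path_vertices: "supp n w \<subseteq> path_vertices n"
  unfolding supp_def by auto

lemma bad_triple_restrict_supp:
  "bad_triple n (C |` supp n w) w x y z \<longleftrightarrow> bad_triple n C w x y z"
  unfolding bad_triple_def by auto

lemma proc_stepE:
  assumes "proc_step n C w w'"
  obtains x y z where "bad_triple n C w x y z"
    and "w' = (\<lambda>v. if v \<in> {x, y, z} then w v - Min {w x, w y, w z} else w v)"
  using assms unfolding proc_step_def Let_def bad_triple_restrict_supp by blast

lemma supp_proc_step_psubset:
  assumes "proc_step n C w w'"
  shows "supp n w' \<subset> supp n w"
proof -
  obtain x y z where b: "bad_triple n C w x y z"
    and w': "w' = (\<lambda>v. if v \<in> {x, y, z} then w v - Min {w x, w y, w z} else w v)"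
    using assms by (rule proc_stepE)
  have xyz: "x \<in> supp n w" "y \<in> supp n w" "z \<in> supp n w"
    using b unfolding bad_triple_def by auto
  then have "supp n w' \<subseteq> supp n w"
    unfolding supp_def w' by (auto simp: min_def split: if_splits)
  moreover have "\<exists>v \<in> {x, y, z}. w' v = 0"
    unfolding w' by (auto simp: min_def)
  then obtain v where "v \<in> {x, y, z}" "w' v = 0" by blast
  then have "v \<in> supp n w - supp n w'"
    using xyz unfolding supp_def by auto
  ultimately show ?thesis by blast
qed

lemma nonneg_proc_step:
  assumes "proc_step n C w w'" "\<forall>v \<in> path_vertices n. 0 \<le> w v"
  shows "\<forall>v \<in> path_vertices n. 0 \<le> w' v"
  using assms(1)
proof (rule proc_stepE)
  fix x y z
  assume "w' = (\<lambda>v. if v \<in> {x, y, z} then w v - Min {w x, w y, w z} else w v)"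
  with assms(2) show ?thesis by (auto simp: min_def)
qed

lemma wfp_proc_step: "wfp (\<lambda>w' w. proc_step n C w w')"
  by (rule wfp_if_convertible_to_nat[where f = "\<lambda>w. card (supp n w)"])
    (metis finite_supp psubset_card_mono supp_proc_step_psubset)

lemma exists_monotone_retraction:
  fixes D :: "nat set"
  assumes "finite D" "D \<noteq> {}"
  obtains p where "\<And>v. p v \<in> D" "\<And>d. d \<in> D \<Longrightarrow> p d = d" "mono p"
proof
  define p where "p v = (if \<exists>d\<in>D. d \<le> v then Max {d\<in>D. d \<le> v} else Min D)" for v
  show "p v \<in> D" for v
    using assms Max_in[of "{d\<in>D. d \<le> v}"] Min_in[of D] unfolding p_def by auto
  show "p d = d" if "d \<in> D" for d
    using assms that unfolding p_def by (auto intro: Max_eqI)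
  show "mono p"
  proof
    fix u v :: nat
    assume "u \<le> v"
    show "p u \<le> p v"
    proof (cases "\<exists>d\<in>D. d \<le> u")
      case True
      with \<open>u \<le> v\<close> have "\<exists>d\<in>D. d \<le> v" using le_trans by blast
      moreover have "Max {d\<in>D. d \<le> u} \<le> Max {d\<in>D. d \<le> v}"
        using assms True \<open>u \<le> v\<close> by (intro Max_mono) auto
      ultimately show ?thesis using True unfolding p_def by simp
    next
      case False
      have "Min D \<le> p v"
        using assms \<open>p v \<in> D\<close> by simp
      with False show ?thesis unfolding p_def by simp
    qed
  qed
qed

lemma convex_pc_if_no_bad_pattern:
  fixes P :: "nat \<Rightarrow> 'c option"
  assumes "dom P \<subseteq> {..<n}"
    and no_bad: "\<And>x y z. \<lbrakk>x \<in> dom P; y \<in> dom P; z \<in> dom P; x < y; y < z; P x = P z\<rbrakk>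
      \<Longrightarrow> P y = P x"
  shows "convex_pc n P"
proof (cases "dom P = {}")
  case True
  then show ?thesis
    unfolding convex_pc_def total_convex_def by auto
next
  case False
  have "finite (dom P)"
    using assms(1) finite_subset by blast
  then obtain p where p_dom: "\<And>v. p v \<in> dom P"
    and p_id: "\<And>d. d \<in> dom P \<Longrightarrow> p d = d" and "mono p"
    using exists_monotone_retraction[OF \<open>finite (dom P)\<close> False] by metis
  define f where "f v = the (P (p v))" for v
  have P_p: "P (p v) = Some (f v)" for v
    using p_dom[of v] unfolding f_def by auto
  show ?thesis
    unfolding convex_pc_def
  proof (intro exI conjI)
    show "\<forall>v\<in>dom P. P v = Some (f v)"
      using P_p p_id by metis
    show "total_convex n f"
      unfolding total_convex_def
    proof (intro allI impI)
      fix c u v x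
      assume "u < v \<and> v < x \<and> x < n \<and> f u = c \<and> f x = c"
      then have "u \<le> v" "v \<le> x" "f u = c" "f x = c" by auto
      with \<open>mono p\<close> have "p u \<le> p v" "p v \<le> p x" "P (p u) = P (p x)"
        by (auto simp: monoD P_p)
      then have "P (p v) = P (p u)"
        using no_bad[of "p u" "p v" "p x"] p_dom by (cases "p u = p v \<or> p v = p x") auto
      with \<open>f u = c\<close> show "f v = c" by (simp add: P_p)
    qed
  qed
qed

lemma is_cover_complement_iff:
  assumes "dom C \<subseteq> path_vertices n" "S \<subseteq> path_vertices n"
  shows "is_cover n C (path_vertices n - S) \<longleftrightarrow> convex_pc n (C |` S)"
proof -
  have "C |` (dom C - (path_vertices n - S)) = C |` S"
    using assms by (auto simp: restrict_map_def fun_eq_iff)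
  then show ?thesis
    unfolding is_cover_def by simp
qed

lemma bad_triple_if_not_cover:
  assumes "\<not> is_cover n (C |` supp n w) (path_vertices n - supp n w)"
  shows "\<exists>x y z. bad_triple n (C |` supp n w) w x y z"
proof (rule ccontr)
  assume no_bad: "\<not> ?thesis"
  define P where "P = C |` supp n w"
  have dom_P: "dom P \<subseteq> supp n w"
    unfolding P_def by auto
  have "convex_pc n P"
  proof (rule convex_pc_if_no_bad_pattern)
    show "dom P \<subseteq> {..<n}"
      using dom_P supp_subset_path_vertices unfolding path_vertices_def by blast
    fix x y z
    assume "x \<in> dom P" "y \<in> dom P" "z \<in> dom P" "x < y" "y < z" "P x = P z"
    moreover have "\<not> bad_triple n P w x y z"
      using no_bad unfolding P_def by blast
    ultimately show "P y = P x"
      using dom_P unfolding bad_triple_def between_def by auto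
  qed
  moreover have "is_cover n P (path_vertices n - supp n w) \<longleftrightarrow> convex_pc n P"
    using is_cover_complement_iff[of P n "supp n w"] dom_P supp_subset_path_vertices
    unfolding P_def by auto
  ultimately show False
    using assms unfolding P_def by blast
qed

lemma exists_proc_out: "\<exists>X. proc_out n C w X"
  using wfp_proc_step[of n C]
proof (induction w rule: wfp_induct_rule)
  case (less w)
  show ?case
  proof (cases "is_cover n (C |` supp n w) (path_vertices n - supp n w)")
    case True
    then show ?thesis by (blast intro: out_done)
  next
    case False
    then obtain x y z where "bad_triple n (C |` supp n w) w x y z"
      using bad_triple_if_not_cover by blast
    with False have step: "proc_step n C w
        (\<lambda>v. if v \<in> {x, y, z} then w v - Min {w x, w y, w z} else w v)"
      unfolding proc_step_def Let_def by blast
    with less show ?thesis by (blast intro: out_step)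
  qed
qed

lemma proc_out_subset: "proc_out n C w X \<Longrightarrow> X \<subseteq> path_vertices n"
  by (induction rule: proc_out.induct) auto

lemma is_cover_proc_out:
  assumes "proc_out n C w X" "dom C \<subseteq> path_vertices n"
  shows "is_cover n C X"
  using assms(1)
proof induction
  case (out_done w)
  have "is_cover n (C |` supp n w) (path_vertices n - supp n w) \<longleftrightarrow> convex_pc n (C |` supp n w)"
    using is_cover_complement_iff[of "C |` supp n w" n "supp n w"] assms(2)
      supp_subset_path_vertices by auto
  with out_done show ?case
    using is_cover_complement_iff[OF assms(2) supp_subset_path_vertices] by simp
qed

lemma total_convexD:
  assumes "total_convex n f" "u < v" "v < t" "t < n" "f u = f t"
  shows "f v = f u"
  using assms unfolding total_convex_def by metis

lemma total_convex_between:
  assumes "total_convex n f" "between x y z" "x < n" "z < n" "f x = f z"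
  shows "f y = f x"
proof -
  from assms(2) consider "x < y" "y < z" | "z < y" "y < x"
    unfolding between_def by blast
  then show ?thesis
  proof cases
    case 1
    then show ?thesis
      using total_convexD[OF assms(1), of x y z] assms(4,5) by simp
  next
    case 2
    then show ?thesis
      using total_convexD[OF assms(1), of z y x] assms(3,5) by simp
  qed
qed

lemma cover_meets_bad_triple:
  assumes "is_cover n C Y" "bad_triple n C w x y z" "supp n w \<subseteq> dom C"
  shows "Y \<inter> {x, y, z} \<noteq> {}"
proof
  assume disjoint: "Y \<inter> {x, y, z} = {}"
  obtain f where f: "\<forall>v\<in>dom (C |` (dom C - Y)). (C |` (dom C - Y)) v = Some (f v)"
    and "total_convex n f"
    using assms(1) unfolding is_cover_def convex_pc_def by blast
  have "x \<in> dom C" "y \<in> dom C" "z \<in> dom C"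
    using assms(2,3) unfolding bad_triple_def by auto
  with f disjoint have "C x = Some (f x)" "C y = Some (f y)" "C z = Some (f z)"
    by auto
  moreover have "x < n" "z < n" "C x = C z" "C x \<noteq> C y" "between x y z"
    using assms(2) unfolding bad_triple_def supp_def path_vertices_def by auto
  ultimately show False
    using total_convex_between[OF \<open>total_convex n f\<close>, of x y z] by auto
qed

lemma sum_reduced_weight:
  assumes "finite A"
  shows "sum (\<lambda>v. if v \<in> T then w v - e else w v) A = sum w A - real (card (A \<inter> T)) * e"
proof -
  have "sum w A = (\<Sum>v\<in>A. (if v \<in> T then w v - e else w v) + (if v \<in> T then e else 0))"
    by (rule sum.cong) auto
  also have "\<dots> = sum (\<lambda>v. if v \<in> T then w v - e else w v) A
      + sum (\<lambda>v. if v \<in> T then e else 0) A"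
    by (rule sum.distrib)
  also have "sum (\<lambda>v. if v \<in> T then e else 0) A = real (card (A \<inter> T)) * e"
    using assms by (simp add: sum.If_cases Int_def)
  finally show ?thesis by simp
qed

lemma proc_step_local_ratio:
  assumes "proc_step n C w w'" "is_cover n C Y" "supp n w \<subseteq> dom C" "finite X"
  shows "sum w X - sum w' X \<le> 3 * (sum w Y - sum w' Y)"
proof -
  obtain x y z where b: "bad_triple n C w x y z"
    and w': "w' = (\<lambda>v. if v \<in> {x, y, z} then w v - Min {w x, w y, w z} else w v)"
    using assms(1) by (rule proc_stepE)
  define \<epsilon> where "\<epsilon> = Min {w x, w y, w z}"
  have "0 < \<epsilon>"
    using b unfolding \<epsilon>_def bad_triple_def supp_def by simp
  have "finite Y"
    using assms(2) unfolding is_cover_def path_vertices_def by (auto intro: finite_subset)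
  have "card (X \<inter> {x, y, z}) \<le> card {x, y, z}"
    by (intro card_mono) auto
  also have "\<dots> \<le> 3"
    by (simp add: card_insert_le_m1)
  finally have "sum w X - sum w' X \<le> 3 * \<epsilon>"
    using \<open>0 < \<epsilon>\<close> unfolding w' \<epsilon>_def[symmetric] sum_reduced_weight[OF \<open>finite X\<close>]
    by (simp add: mult_right_mono)
  also have "\<dots> \<le> 3 * (sum w Y - sum w' Y)"
  proof -
    have "Y \<inter> {x, y, z} \<noteq> {}"
      using cover_meets_bad_triple[OF assms(2) b assms(3)] .
    with \<open>finite Y\<close> have "1 \<le> card (Y \<inter> {x, y, z})"
      by (simp add: Suc_le_eq card_gt_0_iff)
    with \<open>0 < \<epsilon>\<close> show ?thesis
      unfolding w' \<epsilon>_def[symmetric] sum_reduced_weight[OF \<open>finite Y\<close>] by simp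
  qed
  finally show ?thesis .
qed

lemma proc_out_weight_le:
  assumes "proc_out n C w X" "is_cover n C Y"
    and "\<forall>v \<in> path_vertices n. 0 \<le> w v" "supp n w \<subseteq> dom C"
  shows "sum w X \<le> 3 * sum w Y"
  using assms(1,3,4)
proof (induction rule: proc_out.induct)
  case (out_done w)
  have "sum w (path_vertices n - supp n w) = 0"
    using out_done.prems(1) by (intro sum.neutral) (auto simp: supp_def less_le)
  moreover have "0 \<le> sum w Y"
    using out_done.prems(1) assms(2) unfolding is_cover_def by (auto intro: sum_nonneg)
  ultimately show ?case by simp
next
  case (out_step w w' X)
  have "sum w' X \<le> 3 * sum w' Y"
    using out_step nonneg_proc_step supp_proc_step_psubset by blast
  moreover have "finite X"
    using proc_out_subset[OF out_step.hyps(2)] unfolding path_vertices_def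
    by (auto intro: finite_subset)
  then have "sum w X - sum w' X \<le> 3 * (sum w Y - sum w' Y)"
    using proc_step_local_ratio[OF out_step.hyps(1) assms(2) out_step.prems(2)] by blast
  ultimately show ?case by (simp add: algebra_simps)
qed

lemma OPT_attained:
  assumes "dom C \<subseteq> path_vertices n"
  obtains Y where "is_cover n C Y" "OPT n C w = sum w Y"
proof -
  have empty_dom: "dom (C |` (dom C - path_vertices n)) = {}"
    using assms by auto
  have "convex_pc n (C |` (dom C - path_vertices n))"
    by (rule convex_pc_if_no_bad_pattern) (use empty_dom in auto)
  then have "is_cover n C (path_vertices n)"
    unfolding is_cover_def by simp
  moreover have "finite {Y. is_cover n C Y}"
    by (rule finite_subset[of _ "Pow (path_vertices n)"])
      (auto simp: is_cover_def path_vertices_def)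
  ultimately have "OPT n C w \<in> sum w ` {Y. is_cover n C Y}"
    unfolding OPT_def by (intro Min_in) auto
  then show ?thesis
    using that by blast
qed

theorem mainTheorem5:
  fixes n :: nat and C :: "nat \<Rightarrow> 'c option" and w :: "nat \<Rightarrow> real"
  assumes nonneg: "\<forall>v \<in> path_vertices n. 0 \<le> w v"
    and domC: "dom C = supp n w"
  shows "(\<forall>w'. (proc_step n C)\<^sup>*\<^sup>* w w' \<longrightarrow>
             \<not> is_cover n (C |` supp n w') (path_vertices n - supp n w') \<longrightarrow>
             (\<exists>x y z. bad_triple n (C |` supp n w') w' x y z))
       \<and> \<not> (\<exists>f. f 0 = w \<and> (\<forall>i. proc_step n C (f i) (f (Suc i))))
       \<and> (\<exists>X. proc_out n C w X)
       \<and> (\<forall>X. proc_out n C w X \<longrightarrow> is_cover n C X \<and> sum w X \<le> 3 * OPT n C w)"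
proof (intro conjI allI impI)
  show "\<exists>x y z. bad_triple n (C |` supp n w') w' x y z"
    if "\<not> is_cover n (C |` supp n w') (path_vertices n - supp n w')" for w'
    using that by (rule bad_triple_if_not_cover)
  show "\<not> (\<exists>f. f 0 = w \<and> (\<forall>i. proc_step n C (f i) (f (Suc i))))"
    using wfp_proc_step[unfolded wf_iff_no_infinite_down_chain[to_pred]] by blast
  show "\<exists>X. proc_out n C w X"
    by (rule exists_proc_out)
  have dom_C: "dom C \<subseteq> path_vertices n"
    using domC unfolding supp_def by auto
  fix X
  assume out: "proc_out n C w X"
  then show "is_cover n C X"
    using dom_C by (rule is_cover_proc_out)
  obtain Y where "is_cover n C Y" "OPT n C w = sum w Y"
    using dom_C by (rule OPT_attained)
  with out nonneg domC show "sum w X \<le> 3 * OPT n C w"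
    using proc_out_weight_le by fastforce
qed

end
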